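(* Let $p,q$ be nonnegative integers and let $x,z$ be arbitrary complex numbers. Then $$\binom{2x+z-q}{p}\binom{x}{q}=\sum_{i=0}^{p+q}\beta_i(p,q,z)\binom{2x+z}{i},$$ where $$\beta_i(p,q,z)=\frac{1}{2^{2q}}\sum_{b=\max(0,i-p)}^{q}2^b\binom{2q-b}{q}\sum_{a=0}^{b}\binom{p+b-q-z}{a}\binom{q+z}{b-a}\binom{a-q}{p+b-i}.$$
   Context: For complex $y$ and integer $n\ge0$, $\binom{y}{n}=y(y-1)\cdots(y-n+1)/n!$. *)

theory Defs
  imports Complex_Main
begin

definition beta :: "nat \<Rightarrow> nat \<Rightarrow> nat \<Rightarrow> complex \<Rightarrow> complex" where
  "beta i p q z = (1 / 2 ^ (2 * q)) *
     (\<Sum>b = max 0 (int i - int p) .. int q.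
        2 powi b * of_nat ((2 * q - nat b) choose q) *
        (\<Sum>a = 0 .. nat b.
           ((of_nat p + of_int b - of_nat q - z) gchoose a) *
           ((of_nat q + z) gchoose (nat b - a)) *
           ((of_nat a - of_nat q) gchoose nat (int p + b - int i))))"

end

theory Submission
  imports Defs "HOL-Computational_Algebra.Formal_Power_Series"
begin

(* Writing C(y,n) for y gchoose n, two identities are combined. First,
     4^q C(x,q) = sum_{b=0..q} 2^b C(2q-b,q) C(2x-2q+b,b),
   since both sides satisfy (q+1) S(q+1) = 4 (x-q) S(q); for the right-hand side this is
   creative telescoping with an explicit certificate. Second, for each b the product
   C(2x+z-q,p) C(2x-2q+b,b) expands in the basis C(2x+z,i), by Vandermonde's convolution and
   trinomial revision, with the inner sums over a of beta as coefficients. Multiplying the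
   first identity by C(2x+z-q,p), expanding each summand by the second and collecting the
   coefficient of C(2x+z,i) gives beta_i. *)

lemma gbinomial_Suc_mult:
  "of_nat (Suc k) * (a gchoose Suc k) = (a - of_nat k) * (a gchoose k)"
  for a :: "'a::field_char_0"
  using gbinomial_mult_1[of a k] by (simp add: algebra_simps)

lemma of_nat_binomial_Suc_Suc:
  "(of_nat (Suc n choose Suc k) :: 'a::field_char_0) = of_nat (Suc n) / of_nat (Suc k) * of_nat (n choose k)"
proof -
  have "(of_nat (Suc k) * of_nat (Suc n choose Suc k) :: 'a) = of_nat (Suc n) * of_nat (n choose k)"
    by (metis Suc_times_binomial of_nat_mult)
  then show ?thesis
    by (simp add: field_simps del: of_nat_Suc)
qed

lemma of_nat_binomial_diff_Suc:
  assumes "k \<le> n" "n \<noteq> 0"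
  shows "(of_nat ((n - 1) choose k) :: 'a::field_char_0) = of_nat (n - k) / of_nat n * of_nat (n choose k)"
proof -
  have "(of_nat n * of_nat ((n - 1) choose k) :: 'a) = of_nat (n - k) * of_nat (n choose k)"
    by (metis binomial_absorb_comp mult.commute of_nat_mult)
  then show ?thesis
    using assms by (simp add: field_simps)
qed

lemma one_plus_of_nat_neq_0: "1 + of_nat n \<noteq> (0::'a::semiring_char_0)"
  by (metis of_nat_Suc of_nat_neq_0 add.commute)

definition doubling_term :: "'a::field_char_0 \<Rightarrow> nat \<Rightarrow> nat \<Rightarrow> 'a" where
  "doubling_term x q b =
     2 ^ b * of_nat ((2 * q - b) choose q) * ((2 * x - 2 * of_nat q + of_nat b) gchoose b)"

(* Zeilberger's certificate for the recurrence of sum_b doubling_term x q b *)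
fun doubling_cert :: "'a::field_char_0 \<Rightarrow> nat \<Rightarrow> nat \<Rightarrow> 'a" where
  "doubling_cert x q 0 = 0"
| "doubling_cert x q (Suc j) = 2 ^ Suc j * of_nat ((2 * q - j) choose q) *
     (2 * x - 4 * of_nat q - 1 + 2 * of_nat j) * ((2 * x - 2 * of_nat q - 1 + of_nat j) gchoose j)"

lemma doubling_term_telescoping_0:
  fixes x :: "'a::field_char_0"
  shows "of_nat (q + 1) * doubling_term x (q + 1) 0 - 4 * (x - of_nat q) * doubling_term x q 0
       = doubling_cert x q 0 - doubling_cert x q (Suc 0)"
proof -
  define A :: 'a where "A = of_nat (Suc (2 * q) choose q)"
  have binomials: "(of_nat ((2 * (q + 1) - 0) choose (q + 1)) :: 'a) = of_nat (Suc (Suc (2 * q))) / of_nat (Suc q) * A"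
    "(of_nat ((2 * q - 0) choose q) :: 'a) = of_nat (Suc q) / of_nat (Suc (2 * q)) * A"
    using of_nat_binomial_Suc_Suc[of "Suc (2 * q)" q] of_nat_binomial_diff_Suc[of q "Suc (2 * q)"]
    by (simp_all add: A_def)
  show ?thesis
    unfolding doubling_term_def doubling_cert.simps binomials
    by (simp add: field_simps del: of_nat_Suc) (simp add: algebra_simps)
qed

(* The telescoping identity for b = Suc j with the factor 2^(Suc j) C(2q-j,q) / (2q-j)
   divided out; there N = 2q - j, t = q - j and w = 2x - 2q - 1 + j. *)
lemma doubling_cert_gbinomial_relation:
  fixes w t :: "'a::field_char_0" and j :: nat
  defines "N \<equiv> of_nat j + 2 * t"
  shows "N * (N + 1) * (w gchoose Suc j) - 2 * t * ((w + 1 - of_nat j) * ((w + 2) gchoose Suc j))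
       = N * (w - N) * (w gchoose j) - 2 * t * (w + 2 - N) * ((w + 1) gchoose Suc j)"
proof -
  have absorb: "(w + 1 - of_nat j) * ((w + 2) gchoose Suc j) = (w + 2) * ((w + 1) gchoose Suc j)"
    using gbinomial_absorb_comp[of "w + 2" "Suc j"] by (simp add: algebra_simps)
  have "N * (N + 1) * (w gchoose Suc j) - 2 * t * ((w + 1 - of_nat j) * ((w + 2) gchoose Suc j))
      - (N * (w - N) * (w gchoose j) - 2 * t * (w + 2 - N) * ((w + 1) gchoose Suc j))
      = N * (of_nat (Suc j) * (w gchoose Suc j) - (w - of_nat j) * (w gchoose j))"
    unfolding absorb gbinomial_Suc_Suc [of w j] N_def by (simp add: algebra_simps)
  then show ?thesis
    using gbinomial_Suc_mult[of j w] by simp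
qed

lemma doubling_term_telescoping_Suc:
  fixes x :: "'a::field_char_0"
  assumes "1 \<le> q" "j \<le> q"
  shows "of_nat (q + 1) * doubling_term x (q + 1) (Suc j) - 4 * (x - of_nat q) * doubling_term x q (Suc j)
       = doubling_cert x q (Suc j) - doubling_cert x q (Suc (Suc j))"
proof -
  define N where "N = 2 * q - j"
  define A :: 'a where "A = of_nat (N choose q)"
  define t :: 'a where "t = of_nat (N - q)"
  define w where "w = 2 * x - 2 * of_nat q - 1 + of_nat j"
  have N: "2 * (q + 1) - Suc j = Suc N" "2 * q - Suc j = N - 1" "2 * q - j = N"
    "of_nat j + 2 * t = of_nat N" "of_nat N = 2 * of_nat q - (of_nat j :: 'a)"
    using assms by (auto simp: N_def t_def of_nat_diff)
  have N_nz: "N \<noteq> 0" and "q \<le> N"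
    using assms by (auto simp: N_def)
  have binomials: "of_nat (Suc N choose (q + 1)) = of_nat (Suc N) / of_nat (Suc q) * A"
    "(of_nat ((N - 1) choose q) :: 'a) = t / of_nat N * A"
    using of_nat_binomial_Suc_Suc[of N q] of_nat_binomial_diff_Suc[of q N] N_nz \<open>q \<le> N\<close>
    by (simp_all add: A_def t_def)
  have args: "2 * x - 2 * of_nat (q + 1) + of_nat (Suc j) = w"
    "2 * x - 2 * of_nat q + of_nat (Suc j) = w + 2"
    "2 * x - 2 * of_nat q - 1 + of_nat (Suc j) = w + 1"
    "2 * x - 2 * of_nat q - 1 + of_nat j = w"
    "4 * (x - of_nat q) = 2 * (w + 1 - of_nat j)"
    "2 * x - 4 * of_nat q - 1 + 2 * of_nat j = w - of_nat N"
    "2 * x - 4 * of_nat q - 1 + 2 * of_nat (Suc j) = w + 2 - of_nat N"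
    by (simp_all add: w_def N(5) algebra_simps)
  have "of_nat (q + 1) * doubling_term x (q + 1) (Suc j) - 4 * (x - of_nat q) * doubling_term x q (Suc j)
      = 2 ^ Suc j * A / of_nat N * (of_nat N * (of_nat N + 1) * (w gchoose Suc j)
          - 2 * t * ((w + 1 - of_nat j) * ((w + 2) gchoose Suc j)))"
    unfolding doubling_term_def N(1,2) binomials args
    by (simp add: N_nz one_plus_of_nat_neq_0 divide_simps) (simp add: N_nz algebra_simps)
  also have "\<dots> = 2 ^ Suc j * A / of_nat N * (of_nat N * (w - of_nat N) * (w gchoose j)
          - 2 * t * (w + 2 - of_nat N) * ((w + 1) gchoose Suc j))"
    using doubling_cert_gbinomial_relation[of j t w] unfolding N(4) by simp
  also have "\<dots> = doubling_cert x q (Suc j) - doubling_cert x q (Suc (Suc j))"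
    unfolding doubling_cert.simps N(2,3) binomials args A_def[symmetric]
    by (simp add: N_nz field_simps)
  finally show ?thesis .
qed

lemma doubling_sum_recurrence:
  fixes x :: "'a::field_char_0"
  assumes "1 \<le> q"
  shows "of_nat (q + 1) * (\<Sum>b=0..q + 1. doubling_term x (q + 1) b)
       = 4 * (x - of_nat q) * (\<Sum>b=0..q. doubling_term x q b)"
proof -
  have "doubling_term x q (q + 1) = 0" "doubling_cert x q (Suc (q + 1)) = 0"
    using assms by (simp_all add: doubling_term_def)
  then have "(\<Sum>b=0..q. doubling_term x q b) = (\<Sum>b=0..q + 1. doubling_term x q b)"
    by simp
  then have "of_nat (q + 1) * (\<Sum>b=0..q + 1. doubling_term x (q + 1) b)
      - 4 * (x - of_nat q) * (\<Sum>b=0..q. doubling_term x q b)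
      = (\<Sum>b=0..q + 1. of_nat (q + 1) * doubling_term x (q + 1) b - 4 * (x - of_nat q) * doubling_term x q b)"
    by (simp only: sum_distrib_left sum_subtractf)
  also have "\<dots> = (\<Sum>b=0..q + 1. doubling_cert x q b - doubling_cert x q (Suc b))"
  proof (rule sum.cong)
    fix b assume b: "b \<in> {0..q + 1}"
    show "of_nat (q + 1) * doubling_term x (q + 1) b - 4 * (x - of_nat q) * doubling_term x q b
        = doubling_cert x q b - doubling_cert x q (Suc b)"
    proof (cases b)
      case 0
      then show ?thesis
        using doubling_term_telescoping_0 by simp
    next
      case (Suc j)
      then show ?thesis
        using assms b doubling_term_telescoping_Suc[of q j x] by simp
    qed
  qed simp
  also have "\<dots> = 0"
    using \<open>doubling_cert x q (Suc (q + 1)) = 0\<close> by (simp only: atLeast0AtMost sum_telescope) simp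
  finally show ?thesis
    by simp
qed

lemma doubling_term_sum: "(\<Sum>b=0..q. doubling_term x q b) = 4 ^ q * (x gchoose q)"
  for x :: "'a::field_char_0"
proof (induction q)
  case 0
  then show ?case
    by (simp add: doubling_term_def)
next
  case (Suc q)
  show ?case
  proof (cases "q = 0")
    case True
    then show ?thesis
      by (simp add: doubling_term_def algebra_simps)
  next
    case False
    then have "of_nat (Suc q) * (\<Sum>b=0..Suc q. doubling_term x (Suc q) b)
        = 4 ^ Suc q * ((x - of_nat q) * (x gchoose q))"
      using doubling_sum_recurrence[of q x] Suc.IH by simp
    also have "\<dots> = 4 ^ Suc q * (of_nat (Suc q) * (x gchoose Suc q))"
      by (simp only: gbinomial_Suc_mult)
    finally show ?thesis
      by (metis mult.left_commute mult_left_cancel of_nat_neq_0)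
  qed
qed

lemma gbinomial_sum_trinomial_revision:
  fixes c t :: "'a::field_char_0"
  assumes "i \<le> b"
  shows "(\<Sum>a=0..b. (c gchoose a) * (of_nat a gchoose i) * (t gchoose (b - a)))
       = (c gchoose i) * ((c - of_nat i + t) gchoose (b - i))"
proof -
  have "(\<Sum>a=0..b. (c gchoose a) * (of_nat a gchoose i) * (t gchoose (b - a)))
      = (\<Sum>a=i..b. (c gchoose a) * (of_nat a gchoose i) * (t gchoose (b - a)))"
    by (rule sum.mono_neutral_right) (auto simp: binomial_gbinomial [symmetric])
  also have "\<dots> = (\<Sum>k=0..b - i. (c gchoose (k + i)) * (of_nat (k + i) gchoose i) * (t gchoose (b - (k + i))))"
    using assms sum.shift_bounds_cl_nat_ivl[of "\<lambda>a. (c gchoose a) * (of_nat a gchoose i) * (t gchoose (b - a))" 0 i "b - i"]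
    by simp
  also have "\<dots> = (c gchoose i) * (\<Sum>k=0..b - i. ((c - of_nat i) gchoose k) * (t gchoose (b - i - k)))"
    unfolding sum_distrib_left
  proof (rule sum.cong)
    fix k
    show "(c gchoose (k + i)) * (of_nat (k + i) gchoose i) * (t gchoose (b - (k + i)))
        = (c gchoose i) * (((c - of_nat i) gchoose k) * (t gchoose (b - i - k)))"
      using gbinomial_trinomial_revision[of i "k + i" c] by (simp add: mult.assoc add.commute)
  qed simp
  also have "\<dots> = (c gchoose i) * ((c - of_nat i + t) gchoose (b - i))"
    by (simp only: gbinomial_Vandermonde)
  finally show ?thesis .
qed

lemma gbinomial_convolution_shift:
  fixes c t Y :: "'a::field_char_0"
  assumes "b \<le> n"
  shows "(\<Sum>a=0..b. (c gchoose a) * (t gchoose (b - a)) * ((Y + of_nat a) gchoose n))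
       = (\<Sum>i=0..b. (c gchoose i) * ((c - of_nat i + t) gchoose (b - i)) * (Y gchoose (n - i)))"
proof -
  have "(\<Sum>a=0..b. (c gchoose a) * (t gchoose (b - a)) * ((Y + of_nat a) gchoose n))
      = (\<Sum>i=0..n. (\<Sum>a=0..b. (c gchoose a) * (of_nat a gchoose i) * (t gchoose (b - a))) * (Y gchoose (n - i)))"
    by (simp add: gbinomial_Vandermonde [of "of_nat _" Y, symmetric, simplified add.commute]
        sum_distrib_left sum_distrib_right mult_ac sum.swap [of _ "{0..b}"])
  also have "\<dots> = (\<Sum>i=0..b. (\<Sum>a=0..b. (c gchoose a) * (of_nat a gchoose i) * (t gchoose (b - a))) * (Y gchoose (n - i)))"
    using assms by (intro sum.mono_neutral_right)
      (auto simp: binomial_gbinomial [symmetric] intro!: sum.neutral)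
  also have "\<dots> = (\<Sum>i=0..b. (c gchoose i) * ((c - of_nat i + t) gchoose (b - i)) * (Y gchoose (n - i)))"
    by (simp add: gbinomial_sum_trinomial_revision)
  finally show ?thesis .
qed

lemma gbinomial_mult_gbinomial_expansion:
  fixes Y t :: "'a::field_char_0"
  shows "(Y gchoose p) * ((Y - t + of_nat b) gchoose b)
       = (\<Sum>a=0..b. ((of_nat (p + b) - t) gchoose a) * (t gchoose (b - a)) * ((Y + of_nat a) gchoose (p + b)))"
proof -
  define c where "c = of_nat (p + b) - t"
  have "Y - t + of_nat b = c + (Y - of_nat p)"
    by (simp add: c_def)
  then have "(Y gchoose p) * ((Y - t + of_nat b) gchoose b)
      = (\<Sum>j=0..b. (c gchoose j) * ((Y gchoose p) * ((Y - of_nat p) gchoose (b - j))))"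
    by (simp only: gbinomial_Vandermonde [symmetric] sum_distrib_left mult_ac)
  also have "\<dots> = (\<Sum>j=0..b. (c gchoose j) * ((c - of_nat j + t) gchoose (b - j)) * (Y gchoose (p + b - j)))"
  proof (rule sum.cong)
    fix j assume "j \<in> {0..b}"
    then have j: "p \<le> p + b - j" "p + b - j - p = b - j" "c - of_nat j + t = of_nat (p + b - j)"
      by (auto simp: c_def of_nat_diff)
    have "(Y gchoose p) * ((Y - of_nat p) gchoose (b - j)) = (Y gchoose (p + b - j)) * (of_nat (p + b - j) gchoose p)"
      using gbinomial_trinomial_revision[OF j(1), of Y] j(2) by simp
    also have "\<dots> = (of_nat (p + b - j) gchoose (b - j)) * (Y gchoose (p + b - j))"
      using gbinomial_of_nat_symmetric[OF j(1), where 'a='a] j(2) by simp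
    finally show "(c gchoose j) * ((Y gchoose p) * ((Y - of_nat p) gchoose (b - j)))
        = (c gchoose j) * ((c - of_nat j + t) gchoose (b - j)) * (Y gchoose (p + b - j))"
      unfolding j(3) by (simp only: mult.assoc)
  qed simp
  also have "\<dots> = (\<Sum>a=0..b. (c gchoose a) * (t gchoose (b - a)) * ((Y + of_nat a) gchoose (p + b)))"
    by (rule gbinomial_convolution_shift [symmetric]) simp
  finally show ?thesis
    by (simp add: c_def)
qed

definition beta_coeff :: "nat \<Rightarrow> nat \<Rightarrow> 'a::field_char_0 \<Rightarrow> nat \<Rightarrow> nat \<Rightarrow> 'a" where
  "beta_coeff p q z b i = (\<Sum>a=0..b. ((of_nat p + of_nat b - of_nat q - z) gchoose a)
     * ((of_nat q + z) gchoose (b - a)) * ((of_nat a - of_nat q) gchoose (p + b - i)))"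

lemma gbinomial_mult_gbinomial_beta_coeff:
  fixes x z :: "'a::field_char_0"
  shows "((2 * x + z - of_nat q) gchoose p) * ((2 * x - 2 * of_nat q + of_nat b) gchoose b)
       = (\<Sum>i=0..p + b. beta_coeff p q z b i * ((2 * x + z) gchoose i))"
proof -
  have "((2 * x + z - of_nat q) gchoose p) * ((2 * x - 2 * of_nat q + of_nat b) gchoose b)
      = (\<Sum>a=0..b. ((of_nat p + of_nat b - of_nat q - z) gchoose a) * ((of_nat q + z) gchoose (b - a))
          * (((2 * x + z) + (of_nat a - of_nat q)) gchoose (p + b)))"
    using gbinomial_mult_gbinomial_expansion[of "2 * x + z - of_nat q" p "of_nat q + z" b]
    by (simp add: algebra_simps)
  also have "\<dots> = (\<Sum>a=0..b. \<Sum>i=0..p + b. ((of_nat p + of_nat b - of_nat q - z) gchoose a)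
      * ((of_nat q + z) gchoose (b - a)) * ((of_nat a - of_nat q) gchoose (p + b - i)) * ((2 * x + z) gchoose i))"
    by (simp only: gbinomial_Vandermonde [symmetric] sum_distrib_left mult_ac)
  also have "\<dots> = (\<Sum>i=0..p + b. beta_coeff p q z b i * ((2 * x + z) gchoose i))"
    unfolding beta_coeff_def by (subst sum.swap) (simp only: sum_distrib_right)
  finally show ?thesis .
qed

lemma beta_altdef:
  "beta i p q z = (\<Sum>b=0..q. if i \<le> p + b
     then 2 ^ b * of_nat ((2 * q - b) choose q) * beta_coeff p q z b i else 0) / 4 ^ q"
proof -
  have "{b \<in> {0..q}. i \<le> p + b} = {i - p..q}"
    by auto
  moreover have "{max 0 (int i - int p)..int q} = int ` {i - p..q}"
    by (simp add: image_int_atLeastAtMost max_def of_nat_diff)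
  moreover have "nat (int p + int b - int i) = p + b - i" if "b \<in> {i - p..q}" for b
    using that by auto
  ultimately show ?thesis
    unfolding beta_def beta_coeff_def
    by (simp add: sum.reindex power_mult sum_divide_distrib flip: sum.inter_filter)
qed

lemma gbinomial_mult_doubling_term:
  fixes x z :: "'a::field_char_0"
  assumes "b \<le> q"
  shows "((2 * x + z - of_nat q) gchoose p) * doubling_term x q b
       = (\<Sum>i=0..p + q. (if i \<le> p + b then 2 ^ b * of_nat ((2 * q - b) choose q) * beta_coeff p q z b i else 0)
          * ((2 * x + z) gchoose i))"
proof -
  have "((2 * x + z - of_nat q) gchoose p) * doubling_term x q b = 2 ^ b * of_nat ((2 * q - b) choose q)
      * (((2 * x + z - of_nat q) gchoose p) * ((2 * x - 2 * of_nat q + of_nat b) gchoose b))"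
    by (simp add: doubling_term_def mult_ac)
  also have "\<dots> = (\<Sum>i=0..p + b. 2 ^ b * of_nat ((2 * q - b) choose q) * beta_coeff p q z b i * ((2 * x + z) gchoose i))"
    by (simp add: gbinomial_mult_gbinomial_beta_coeff sum_distrib_left mult.assoc)
  also have "\<dots> = (\<Sum>i=0..p + q. (if i \<le> p + b then 2 ^ b * of_nat ((2 * q - b) choose q) * beta_coeff p q z b i else 0)
      * ((2 * x + z) gchoose i))"
    using assms by (intro sum.mono_neutral_cong_left) auto
  finally show ?thesis .
qed

theorem lemma2p5:
  fixes p q :: nat and x z :: complex
  shows "((2 * x + z - of_nat q) gchoose p) * (x gchoose q) =
         (\<Sum>i = 0 .. p + q. beta i p q z * ((2 * x + z) gchoose i))"
proof -
  have "((2 * x + z - of_nat q) gchoose p) * (x gchoose q)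
      = (\<Sum>b=0..q. ((2 * x + z - of_nat q) gchoose p) * doubling_term x q b) / 4 ^ q"
    by (simp add: doubling_term_sum flip: sum_distrib_left)
  also have "\<dots> = (\<Sum>i = 0 .. p + q. beta i p q z * ((2 * x + z) gchoose i))"
    by (simp add: gbinomial_mult_doubling_term beta_altdef sum.swap [of _ "{0..q}"]
        sum_divide_distrib sum_distrib_right)
  finally show ?thesis .
qed

end
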